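(* Assume (H1), (H2) and the sequence setting (Seq), and let $x\in\mathrm{dom}\,J$ with $\partial J(x)\neq\emptyset$. Then the sequence $\big(\nabla_x S_H(x_k,t_{1,k},\dots,t_{N,k})\big)_k$ is bounded, and each of its cluster points belongs to $\partial J(x)$.
   Context: Hypothesis (H1): each $H_j:\mathbb{R}^n\to\mathbb{R}$ ($j=1,\dots,N$) is finite-valued, convex and 1-coercive (i.e. $H_j(p)/\|p\|\to+\infty$ as $\|p\|\to\infty$), and at least one $H_j$ is strictly convex. Hypothesis (H2): $J:\mathbb{R}^n\to\mathbb{R}\cup\{+\infty\}$ is proper, convex and lower semicontinuous. $J^*$ is the Legendre transform of $J$. Hopf formula: $S_H(y,t_1,\dots,t_N)=\sup_{p\in\mathbb{R}^n}\big(\langle p,y\rangle-J^*(p)-\sum_{j}t_jH_j(p)\big)$ for $t_1,\dots,t_N\ge0$; under (H1)-(H2) and $t_j>0$ for all $j$, $S_H(\cdot,t_1,\dots,t_N)$ is finite and differentiable in $y$, and $\nabla_y S_H$ is the unique maximizer in the Hopf formula. Sequence setting (Seq): $x\in\mathbb{R}^n$; for each $j\in\{1,\dots,N\}$ and $k\in\mathbb{N}$, $t_{j,k}>0$ and $v_{j,k}\in\mathbb{R}^n$, with $t_{j,k}\to0$, $v_{j,k}\to v_{j,\infty}$ and $t_{j,k}/t_{1,k}\to\alpha_{j,\infty}\in\mathbb{R}$ as $k\to\infty$; and $x_k=x+\sum_{j=1}^N t_{j,k}v_{j,k}$. *)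

theory Defs
  imports "HOL-Analysis.Analysis"
begin

definition epi :: "('a::real_normed_vector \<Rightarrow> ereal) \<Rightarrow> ('a \<times> real) set" where
  "epi J = {(x, r). J x \<le> ereal r}"

definition proper_fun :: "('a \<Rightarrow> ereal) \<Rightarrow> bool" where
  "proper_fun J \<longleftrightarrow> (\<forall>x. J x \<noteq> -\<infinity>) \<and> (\<exists>x. J x \<noteq> \<infinity>)"

definition convex_fun :: "('a::real_normed_vector \<Rightarrow> ereal) \<Rightarrow> bool" where
  "convex_fun J \<longleftrightarrow> convex (epi J)"

definition lsc_fun :: "('a::real_normed_vector \<Rightarrow> ereal) \<Rightarrow> bool" where
  "lsc_fun J \<longleftrightarrow> closed (epi J)"

definition strictly_convex :: "('a::real_vector \<Rightarrow> real) \<Rightarrow> bool" where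
  "strictly_convex f \<longleftrightarrow>
     (\<forall>x y u. x \<noteq> y \<and> 0 < u \<and> u < 1 \<longrightarrow>
        f ((1 - u) *\<^sub>R x + u *\<^sub>R y) < (1 - u) * f x + u * f y)"

definition one_coercive :: "('a::real_normed_vector \<Rightarrow> real) \<Rightarrow> bool" where
  "one_coercive f \<longleftrightarrow> filterlim (\<lambda>p. f p / norm p) at_top at_infinity"

definition legendre :: "('a::real_inner \<Rightarrow> ereal) \<Rightarrow> 'a \<Rightarrow> ereal" where
  "legendre J p = (SUP x. ereal (p \<bullet> x) - J x)"

definition hopf :: "nat \<Rightarrow> (nat \<Rightarrow> 'a::real_inner \<Rightarrow> real) \<Rightarrow> ('a \<Rightarrow> ereal)
                    \<Rightarrow> 'a \<Rightarrow> (nat \<Rightarrow> real) \<Rightarrow> ereal" where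
  "hopf N H J y t = (SUP p. ereal (p \<bullet> y) - legendre J p - ereal (\<Sum>j=1..N. t j * H j p))"

definition hopf_grad :: "nat \<Rightarrow> (nat \<Rightarrow> 'a::real_inner \<Rightarrow> real) \<Rightarrow> ('a \<Rightarrow> ereal)
                    \<Rightarrow> 'a \<Rightarrow> (nat \<Rightarrow> real) \<Rightarrow> 'a" where
  "hopf_grad N H J y t = (THE g. GDERIV (\<lambda>z. real_of_ereal (hopf N H J z t)) y :> g)"

definition subdiff :: "('a::real_inner \<Rightarrow> ereal) \<Rightarrow> 'a \<Rightarrow> 'a set" where
  "subdiff J x = {p. \<forall>y. J y \<ge> J x + ereal (p \<bullet> (y - x))}"

definition cluster_point :: "(nat \<Rightarrow> 'a::topological_space) \<Rightarrow> 'a \<Rightarrow> bool" where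
  "cluster_point s q \<longleftrightarrow> (\<exists>r. strict_mono r \<and> (s \<circ> r) \<longlonglongrightarrow> q)"

end

theory Submission
  imports Defs
begin

text \<open>For positive times the function \<open>p \<mapsto> J\<^sup>*(p) + \<Sum>\<^sub>j t\<^sub>j H\<^sub>j(p)\<close> is lower
  semicontinuous, strictly convex and superlinear, so its conjugate, the Hopf value
  \<open>y \<mapsto> S\<^sub>H(y, t)\<close>, is differentiable and its gradient is the unique maximiser in the Hopf formula.
  Comparing the maximiser \<open>p\<^sub>k\<close> at \<open>(x\<^sub>k, t\<^sub>k)\<close> with a subgradient \<open>p\<^sub>0\<close> of \<open>J\<close> at \<open>x\<close>, for which
  \<open>J\<^sup>*(p\<^sub>0) = \<langle>p\<^sub>0, x\<rangle> - J(x)\<close>, gives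
  \<open>0 \<le> J\<^sup>*(p\<^sub>k) - \<langle>p\<^sub>k, x\<rangle> + J(x) \<le> \<Sum>\<^sub>j t\<^sub>j\<^sub>,\<^sub>k (\<langle>p\<^sub>k - p\<^sub>0, v\<^sub>j\<^sub>,\<^sub>k\<rangle> - H\<^sub>j(p\<^sub>k) + H\<^sub>j(p\<^sub>0))\<close>.
  By coercivity every summand is bounded above, the one with \<open>j = 1\<close> even by a constant minus
  \<open>|p\<^sub>k|\<close>; since the ratios \<open>t\<^sub>j\<^sub>,\<^sub>k / t\<^sub>1\<^sub>,\<^sub>k\<close> are bounded, so is \<open>|p\<^sub>k|\<close>, and since \<open>t\<^sub>j\<^sub>,\<^sub>k \<rightarrow> 0\<close>
  the right-hand side tends to \<open>0\<close>. Lower semicontinuity of \<open>J\<^sup>*\<close> then gives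
  \<open>J\<^sup>*(q) \<le> \<langle>q, x\<rangle> - J(x)\<close> at every cluster point \<open>q\<close>, i.e. \<open>q \<in> \<partial>J(x)\<close>.
  Only \<open>J\<^sup>*\<close> enters.\<close>

lemma ereal_real_minus_le_iff: "F \<noteq> -\<infinity> \<Longrightarrow> ereal a - F \<le> ereal c \<longleftrightarrow> ereal (a - c) \<le> F"
  by (cases F) auto

lemma ereal_le_real_minus_iff: "F \<noteq> -\<infinity> \<Longrightarrow> ereal c \<le> ereal a - F \<longleftrightarrow> F \<le> ereal (a - c)"
  by (cases F) auto

lemma ereal_less_real_minus_iff: "F \<noteq> -\<infinity> \<Longrightarrow> ereal c < ereal a - F \<longleftrightarrow> F < ereal (a - c)"
  by (cases F) auto

lemma GDERIV_unique:
  assumes "GDERIV f y :> g1" "GDERIV f y :> g2" shows "g1 = g2"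
proof -
  have "(\<lambda>h. h \<bullet> g1) = (\<lambda>h. h \<bullet> g2)"
    using has_derivative_unique assms unfolding gderiv_def by blast
  then have "(g1 - g2) \<bullet> (g1 - g2) = 0" by (metis inner_diff_right right_minus_eq)
  then show ?thesis by simp
qed

locale strictly_convex_superlinear =
  fixes f :: "'a::euclidean_space \<Rightarrow> ereal"
  assumes not_MInf: "\<And>p. f p \<noteq> -\<infinity>"
    and somewhere_finite: "\<exists>p. f p \<noteq> \<infinity>"
    and seq_lsc: "\<And>p q c d. p \<longlonglongrightarrow> q \<Longrightarrow> (\<And>n. f (p n) \<le> ereal (c n)) \<Longrightarrow> c \<longlonglongrightarrow> d \<Longrightarrow>
                   f q \<le> ereal d"
    and midpoint_strict: "\<And>p q a b. p \<noteq> q \<Longrightarrow> f p = ereal a \<Longrightarrow> f q = ereal b \<Longrightarrow>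
                   f ((1/2) *\<^sub>R (p + q)) < ereal ((a + b) / 2)"
    and superlinear: "\<And>c. \<exists>K. \<forall>p. ereal (c * norm p - K) \<le> f p"
begin

definition conjugate :: "'a \<Rightarrow> ereal" where
  "conjugate y = (SUP p. ereal (p \<bullet> y) - f p)"

definition conjugate_real :: "'a \<Rightarrow> real" where
  "conjugate_real y = real_of_ereal (conjugate y)"

definition maximizer :: "'a \<Rightarrow> 'a" where
  "maximizer y = (SOME p. f p \<le> ereal (p \<bullet> y - conjugate_real y))"

lemma inner_minus_f_decays: obtains K where "\<And>p. ereal (p \<bullet> y) - f p \<le> ereal (K - norm p)"
proof -
  obtain K where K: "\<And>p. ereal ((norm y + 1) * norm p - K) \<le> f p" using superlinear by blast
  have "ereal (p \<bullet> y) - f p \<le> ereal (K - norm p)" for p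
  proof -
    have "p \<bullet> y \<le> norm p * norm y" by (metis Cauchy_Schwarz_ineq2 abs_le_D1 mult.commute)
    then have "ereal (p \<bullet> y - (K - norm p)) \<le> ereal ((norm y + 1) * norm p - K)"
      by (simp add: algebra_simps)
    also have "\<dots> \<le> f p" by (rule K)
    finally show ?thesis using ereal_real_minus_le_iff[OF not_MInf] by blast
  qed
  then show ?thesis using that by blast
qed

lemma le_conjugate: "ereal (p \<bullet> y) - f p \<le> conjugate y"
  unfolding conjugate_def by (rule SUP_upper) auto

lemma conjugate_real_eq: "conjugate y = ereal (conjugate_real y)"
proof -
  obtain K where K: "\<And>p. ereal (p \<bullet> y) - f p \<le> ereal (K - norm p)" using inner_minus_f_decays by blast
  have "conjugate y \<le> ereal K"
    unfolding conjugate_def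
  proof (rule SUP_least)
    fix p show "ereal (p \<bullet> y) - f p \<le> ereal K"
      using K[of p] by (metis ereal_less_eq(3) diff_le_eq norm_ge_zero order.trans le_add_same_cancel1)
  qed
  moreover obtain p0 where "f p0 \<noteq> \<infinity>" using somewhere_finite by blast
  then obtain r0 where r0: "f p0 = ereal r0" using not_MInf by (cases "f p0") auto
  have "ereal (p0 \<bullet> y - r0) \<le> conjugate y" using le_conjugate[of p0 y] r0 by simp
  ultimately show ?thesis unfolding conjugate_real_def by (cases "conjugate y") auto
qed

lemma fenchel_young: "ereal (p \<bullet> y - conjugate_real y) \<le> f p"
  using le_conjugate[of p y] conjugate_real_eq[of y] ereal_real_minus_le_iff[OF not_MInf] by simp

lemma ex_maximizer: "\<exists>p. f p \<le> ereal (p \<bullet> y - conjugate_real y)"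
proof -
  have "\<exists>p. f p \<le> ereal (p \<bullet> y - conjugate_real y + inverse (real (Suc n)))" for n
  proof -
    have "ereal (conjugate_real y - inverse (real (Suc n))) < conjugate y"
      using conjugate_real_eq[of y] by simp
    then obtain p where "ereal (conjugate_real y - inverse (real (Suc n))) < ereal (p \<bullet> y) - f p"
      unfolding conjugate_def less_SUP_iff by blast
    then have "f p < ereal (p \<bullet> y - (conjugate_real y - inverse (real (Suc n))))"
      using ereal_less_real_minus_iff[OF not_MInf] by blast
    then show ?thesis by (intro exI[of _ p]) (simp add: algebra_simps)
  qed
  then obtain pn where pn: "\<And>n. f (pn n) \<le> ereal (pn n \<bullet> y - conjugate_real y + inverse (real (Suc n)))"
    by metis
  obtain K where K: "\<And>p. ereal (p \<bullet> y) - f p \<le> ereal (K - norm p)" using inner_minus_f_decays by blast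
  have "norm (pn n) \<le> K - conjugate_real y + 1" for n
  proof -
    have "ereal (conjugate_real y - inverse (real (Suc n))) \<le> ereal (pn n \<bullet> y) - f (pn n)"
      using pn[of n] ereal_le_real_minus_iff[OF not_MInf] by (simp add: algebra_simps)
    also have "\<dots> \<le> ereal (K - norm (pn n))" by (rule K)
    finally have "conjugate_real y - inverse (real (Suc n)) \<le> K - norm (pn n)" by simp
    moreover have "inverse (real (Suc n)) \<le> 1" by (simp add: inverse_le_1_iff)
    ultimately show ?thesis by linarith
  qed
  then have "bounded (range pn)" unfolding bounded_iff by blast
  then obtain l r where r: "strict_mono r" and l: "(pn \<circ> r) \<longlonglongrightarrow> l"
    using bounded_imp_convergent_subsequence by blast
  have inv0: "(\<lambda>n. inverse (real (Suc (r n)))) \<longlonglongrightarrow> 0"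
    using LIMSEQ_subseq_LIMSEQ[OF LIMSEQ_inverse_real_of_nat r] by (simp add: o_def)
  have "f l \<le> ereal (l \<bullet> y - conjugate_real y + 0)"
  proof (rule seq_lsc[OF l])
    show "f ((pn \<circ> r) n) \<le> ereal ((pn \<circ> r) n \<bullet> y - conjugate_real y + inverse (real (Suc (r n))))" for n
      using pn[of "r n"] by simp
    show "(\<lambda>n. (pn \<circ> r) n \<bullet> y - conjugate_real y + inverse (real (Suc (r n)))) \<longlonglongrightarrow>
          l \<bullet> y - conjugate_real y + 0"
      by (intro tendsto_intros l inv0)
  qed
  then show ?thesis by auto
qed

lemma maximizer_eq: "f (maximizer y) = ereal (maximizer y \<bullet> y - conjugate_real y)"
proof (rule antisym)
  show "f (maximizer y) \<le> ereal (maximizer y \<bullet> y - conjugate_real y)"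
    unfolding maximizer_def by (rule someI_ex[OF ex_maximizer])
qed (rule fenchel_young)

lemma maximizer_unique:
  assumes p: "f p \<le> ereal (p \<bullet> y - conjugate_real y)"
  shows "p = maximizer y"
proof (rule ccontr)
  assume ne: "p \<noteq> maximizer y"
  define m where "m = (1/2) *\<^sub>R (p + maximizer y)"
  have "f p = ereal (p \<bullet> y - conjugate_real y)" using p fenchel_young by (rule antisym)
  then have "f m < ereal (((p \<bullet> y - conjugate_real y) + (maximizer y \<bullet> y - conjugate_real y)) / 2)"
    unfolding m_def using midpoint_strict[OF ne] maximizer_eq by blast
  also have "((p \<bullet> y - conjugate_real y) + (maximizer y \<bullet> y - conjugate_real y)) / 2 =
             m \<bullet> y - conjugate_real y"
    unfolding m_def by (simp add: inner_add_left field_simps)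
  finally show False using fenchel_young[of m y] by simp
qed

lemma maximizer_optimal:
  "f (maximizer y) + ereal (q \<bullet> y) \<le> f q + ereal (maximizer y \<bullet> y)"
  using fenchel_young[of q y] maximizer_eq[of y] not_MInf[of q] by (cases "f q") auto

lemma maximizer_bounded: obtains R where "\<And>y. norm y \<le> M \<Longrightarrow> norm (maximizer y) \<le> R"
proof -
  obtain K where K: "\<And>p. ereal ((M + 1) * norm p - K) \<le> f p" using superlinear by blast
  obtain p0 where "f p0 \<noteq> \<infinity>" using somewhere_finite by blast
  then obtain r0 where r0: "f p0 = ereal r0" using not_MInf by (cases "f p0") auto
  have "norm (maximizer y) \<le> norm p0 * M + r0 + K" if y: "norm y \<le> M" for y
  proof -
    let ?p = "maximizer y"
    have "norm ?p * M + norm ?p - K \<le> ?p \<bullet> y - conjugate_real y"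
      using K[of ?p] maximizer_eq[of y] by (simp add: algebra_simps)
    moreover have "p0 \<bullet> y - conjugate_real y \<le> r0" using fenchel_young[of p0 y] r0 by simp
    moreover have "?p \<bullet> y \<le> norm ?p * M" "- (p0 \<bullet> y) \<le> norm p0 * M"
      using Cauchy_Schwarz_ineq2[of ?p y] Cauchy_Schwarz_ineq2[of p0 y]
        mult_left_mono[OF y norm_ge_zero[of ?p]] mult_left_mono[OF y norm_ge_zero[of p0]] by linarith+
    ultimately show ?thesis by linarith
  qed
  then show ?thesis using that by blast
qed

lemma maximizer_closed_graph:
  assumes y: "yn \<longlonglongrightarrow> y" and q: "(\<lambda>n. maximizer (yn n)) \<longlonglongrightarrow> q"
  shows "q = maximizer y"
proof (rule maximizer_unique)
  let ?p = "maximizer y"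
  have "f q \<le> ereal (q \<bullet> y - ?p \<bullet> y + (?p \<bullet> y - conjugate_real y))"
  proof (rule seq_lsc[OF q])
    fix n
    have "?p \<bullet> yn n - conjugate_real (yn n) \<le> ?p \<bullet> y - conjugate_real y"
      using fenchel_young[of ?p "yn n"] maximizer_eq[of y] by simp
    then show "f (maximizer (yn n)) \<le>
        ereal (maximizer (yn n) \<bullet> yn n - ?p \<bullet> yn n + (?p \<bullet> y - conjugate_real y))"
      using maximizer_eq[of "yn n"] by simp
    show "(\<lambda>n. maximizer (yn n) \<bullet> yn n - ?p \<bullet> yn n + (?p \<bullet> y - conjugate_real y)) \<longlonglongrightarrow>
          q \<bullet> y - ?p \<bullet> y + (?p \<bullet> y - conjugate_real y)"
      by (intro tendsto_intros q y)
  qed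
  then show "f q \<le> ereal (q \<bullet> y - conjugate_real y)" by simp
qed

text \<open>A locally bounded map with closed graph is continuous.\<close>

lemma isCont_maximizer: "isCont maximizer y"
proof -
  obtain R where R: "\<And>z. norm z \<le> norm y + 1 \<Longrightarrow> norm (maximizer z) \<le> R"
    using maximizer_bounded by blast
  have "maximizer \<in> cball y 1 \<rightarrow> cball 0 R"
  proof
    fix z assume "z \<in> cball y 1"
    then have "norm z \<le> norm y + 1"
      using norm_triangle_ineq[of y "z - y"] by (simp add: dist_norm norm_minus_commute)
    then show "maximizer z \<in> cball 0 R" using R by simp
  qed
  moreover have "closed ((\<lambda>z. (z, maximizer z)) ` cball y 1)"
    unfolding closed_sequential_limits
  proof (intro allI impI)
    fix g l assume g: "(\<forall>n. g n \<in> (\<lambda>z. (z, maximizer z)) ` cball y 1) \<and> g \<longlonglongrightarrow> l"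
    have graph: "snd (g n) = maximizer (fst (g n))" and dom: "fst (g n) \<in> cball y 1" for n
      using g[THEN conjunct1, rule_format, of n] by auto
    have fst: "(\<lambda>n. fst (g n)) \<longlonglongrightarrow> fst l" and "(\<lambda>n. snd (g n)) \<longlonglongrightarrow> snd l"
      using g by (auto intro: tendsto_fst tendsto_snd)
    then have "l = (fst l, maximizer (fst l))"
      unfolding graph by (simp add: prod_eq_iff maximizer_closed_graph)
    moreover have "fst l \<in> cball y 1"
      using closed_sequentially[OF closed_cball dom fst] .
    ultimately show "l \<in> (\<lambda>z. (z, maximizer z)) ` cball y 1" by (rule image_eqI)
  qed
  ultimately have "continuous_on (cball y 1) maximizer"
    by (rule continuous_from_closed_graph[OF compact_cball])
  then show ?thesis by (rule continuous_on_interior) simp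
qed

lemma conjugate_real_has_gradient: "GDERIV conjugate_real y :> maximizer y"
  unfolding gderiv_def has_derivative_iff_norm
proof (intro conjI)
  show "bounded_linear (\<lambda>h. h \<bullet> maximizer y)" by (rule bounded_linear_inner_left)
  let ?P = maximizer and ?s = conjugate_real
  \<comment> \<open>Fenchel-Young at \<open>y\<close> and at \<open>z\<close> squeeze the remainder between \<open>0\<close> and \<open>(P z - P y) \<bullet> (z - y)\<close>.\<close>
  have estimate: "\<bar>?s z - ?s y - (z - y) \<bullet> ?P y\<bar> / norm (z - y) \<le> norm (?P z - ?P y)" for z
  proof -
    have "?P y \<bullet> z - ?s z \<le> ?P y \<bullet> y - ?s y" using fenchel_young[of "?P y" z] maximizer_eq[of y] by simp
    moreover have "?P z \<bullet> y - ?s y \<le> ?P z \<bullet> z - ?s z" using fenchel_young[of "?P z" y] maximizer_eq[of z] by simp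
    moreover have "(?P z - ?P y) \<bullet> (z - y) \<le> norm (?P z - ?P y) * norm (z - y)"
      by (rule order_trans[OF abs_ge_self Cauchy_Schwarz_ineq2])
    ultimately have "\<bar>?s z - ?s y - (z - y) \<bullet> ?P y\<bar> \<le> norm (?P z - ?P y) * norm (z - y)"
      unfolding inner_diff_left inner_diff_right by (simp add: inner_commute)
    then show ?thesis by (cases "z = y") (simp_all add: divide_le_eq)
  qed
  have "((\<lambda>z. norm (?P z - ?P y)) \<longlongrightarrow> 0) (at y)"
    using isCont_maximizer[of y] unfolding isCont_def by (intro tendsto_norm_zero LIM_zero)
  then show "((\<lambda>z. norm (?s z - ?s y - (z - y) \<bullet> ?P y) / norm (z - y)) \<longlongrightarrow> 0) (at y)"
    by (rule Lim_null_comparison[OF always_eventually, rotated]) (simp add: estimate)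
qed

end

lemma legendre_fenchel_young: "ereal (p \<bullet> y) - J y \<le> legendre J p"
  unfolding legendre_def by (rule SUP_upper) auto

lemma legendre_ge_affine: "J x = ereal jx \<Longrightarrow> ereal (p \<bullet> x - jx) \<le> legendre J p"
  using legendre_fenchel_young[of p x J] by simp

lemma legendre_le_iff:
  assumes "\<And>z. J z \<noteq> -\<infinity>"
  shows "legendre J p \<le> ereal c \<longleftrightarrow> (\<forall>z. J z \<noteq> \<infinity> \<longrightarrow> p \<bullet> z - real_of_ereal (J z) \<le> c)"
proof -
  have "ereal (p \<bullet> z) - J z \<le> ereal c \<longleftrightarrow> (J z \<noteq> \<infinity> \<longrightarrow> p \<bullet> z - real_of_ereal (J z) \<le> c)" for z
    using assms[of z] by (cases "J z") auto
  then show ?thesis unfolding legendre_def SUP_le_iff by simp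
qed

lemma legendre_seq_lsc:
  assumes "\<And>z. J z \<noteq> -\<infinity>" and p: "p \<longlonglongrightarrow> q" and c: "c \<longlonglongrightarrow> d"
    and le: "\<And>n. legendre J (p n) \<le> ereal (c n)"
  shows "legendre J q \<le> ereal d"
  unfolding legendre_le_iff[OF assms(1)]
proof (intro allI impI)
  fix z assume "J z \<noteq> \<infinity>"
  then have "p n \<bullet> z - real_of_ereal (J z) \<le> c n" for n
    using le[of n] unfolding legendre_le_iff[OF assms(1)] by blast
  then show "q \<bullet> z - real_of_ereal (J z) \<le> d"
    by (intro LIMSEQ_le[of "\<lambda>n. p n \<bullet> z - real_of_ereal (J z)" _ c] c) (auto intro!: tendsto_intros p)
qed

lemma legendre_midpoint_le:
  assumes "\<And>z. J z \<noteq> -\<infinity>" and "legendre J p = ereal a" "legendre J q = ereal b"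
  shows "legendre J ((1/2) *\<^sub>R (p + q)) \<le> ereal ((a + b) / 2)"
  using assms(2,3) unfolding legendre_le_iff[OF assms(1)] eq_iff[of "legendre J p"] eq_iff[of "legendre J q"]
  by (fastforce simp: inner_add_left field_simps)

lemma subdiff_iff_legendre_le:
  assumes "\<And>z. J z \<noteq> -\<infinity>" and "J x = ereal jx"
  shows "p \<in> subdiff J x \<longleftrightarrow> legendre J p \<le> ereal (p \<bullet> x - jx)"
proof -
  have "J x + ereal (p \<bullet> (z - x)) \<le> J z \<longleftrightarrow> (J z \<noteq> \<infinity> \<longrightarrow> p \<bullet> z - real_of_ereal (J z) \<le> p \<bullet> x - jx)"
    for z using assms(1)[of z] assms(2) by (cases "J z") (auto simp: inner_diff_right)
  then show ?thesis unfolding subdiff_def legendre_le_iff[OF assms(1)] by simp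
qed

lemma one_coercive_lower_bound:
  fixes h :: "'a::euclidean_space \<Rightarrow> real"
  assumes cont: "continuous_on UNIV h" and coercive: "one_coercive h"
  obtains K where "\<And>p. c * norm p - K \<le> h p"
proof -
  have "eventually (\<lambda>p. c \<le> h p / norm p) at_infinity"
    using coercive unfolding one_coercive_def filterlim_at_top by blast
  then obtain b where b: "\<And>p. b \<le> norm p \<Longrightarrow> c \<le> h p / norm p"
    unfolding eventually_at_infinity by blast
  define R where "R = max b 1"
  have "compact (h ` cball 0 R)"
    by (rule compact_continuous_image[OF continuous_on_subset[OF cont]]) auto
  then have "bounded (h ` cball 0 R)" by (rule compact_imp_bounded)
  then obtain B where "\<forall>z\<in>h ` cball 0 R. norm z \<le> B" unfolding bounded_iff by blast
  then have B: "\<And>p. p \<in> cball 0 R \<Longrightarrow> norm (h p) \<le> B" by blast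
  have "c * norm p - (B + \<bar>c\<bar> * R) \<le> h p" for p
  proof (cases "norm p \<le> R")
    case True
    have "c * norm p \<le> \<bar>c\<bar> * norm p" by (simp add: mult_right_mono)
    also have "\<dots> \<le> \<bar>c\<bar> * R" using True by (simp add: mult_left_mono)
    finally show ?thesis using B[of p] True by (simp add: abs_le_iff)
  next
    case False
    then have "b \<le> norm p" "norm p > 0" by (auto simp: R_def)
    then have "c * norm p \<le> h p" using b[of p] by (simp add: le_divide_eq)
    moreover have "0 \<le> B" using order_trans[OF norm_ge_zero B[of 0]] by (simp add: R_def)
    moreover have "0 \<le> \<bar>c\<bar> * R" by (simp add: R_def)
    ultimately show ?thesis by linarith
  qed
  then show ?thesis using that by blast
qed

definition weighted_hamiltonian :: "nat \<Rightarrow> (nat \<Rightarrow> 'a \<Rightarrow> real) \<Rightarrow> (nat \<Rightarrow> real) \<Rightarrow> 'a \<Rightarrow> real" where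
  "weighted_hamiltonian N H tt p = (\<Sum>j=1..N. tt j * H j p)"

lemma hopf_eq_conjugate:
  assumes "\<And>p. legendre J p \<noteq> -\<infinity>"
  shows "hopf N H J y tt = (SUP p. ereal (p \<bullet> y) - (legendre J p + ereal (weighted_hamiltonian N H tt p)))"
  unfolding hopf_def weighted_hamiltonian_def
  apply (rule SUP_cong[OF refl])
  subgoal for p using assms[of p] by (cases "legendre J p") auto
  done

lemma hopf_grad_eq_maximizer:
  assumes F: "strictly_convex_superlinear F"
    and hopf: "\<And>z. hopf N H J z tt = strictly_convex_superlinear.conjugate F z"
  shows "hopf_grad N H J y tt = strictly_convex_superlinear.maximizer F y"
proof -
  have "(\<lambda>z. real_of_ereal (hopf N H J z tt)) = strictly_convex_superlinear.conjugate_real F"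
    by (rule ext) (simp add: strictly_convex_superlinear.conjugate_real_def[OF F] hopf)
  then show ?thesis
    unfolding hopf_grad_def
    using GDERIV_unique strictly_convex_superlinear.conjugate_real_has_gradient[OF F] by (metis the_equality)
qed

definition hamiltonian_gap :: "('a::real_inner \<Rightarrow> real) \<Rightarrow> 'a \<Rightarrow> 'a \<Rightarrow> 'a \<Rightarrow> real" where
  "hamiltonian_gap h p0 w p = (p - p0) \<bullet> w - h p + h p0"

lemma sum_hamiltonian_gap:
  "(\<Sum>j=1..N. t j * hamiltonian_gap (H j) p0 (v j) p) =
     (p - p0) \<bullet> (\<Sum>j=1..N. t j *\<^sub>R v j) - weighted_hamiltonian N H t p + weighted_hamiltonian N H t p0"
  unfolding hamiltonian_gap_def weighted_hamiltonian_def
  by (simp add: inner_sum_right algebra_simps sum.distrib sum_subtractf)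

context
  fixes N :: nat and H :: "nat \<Rightarrow> 'a::euclidean_space \<Rightarrow> real" and tt :: "nat \<Rightarrow> real"
  assumes H_convex: "\<And>j. j \<in> {1..N} \<Longrightarrow> convex_on UNIV (H j)"
    and H_coercive: "\<And>j. j \<in> {1..N} \<Longrightarrow> one_coercive (H j)"
    and H_strict: "\<exists>j\<in>{1..N}. strictly_convex (H j)"
    and tt_pos: "\<And>j. j \<in> {1..N} \<Longrightarrow> tt j > 0"
begin

lemma hamiltonian_continuous: "j \<in> {1..N} \<Longrightarrow> continuous_on UNIV (H j)"
  using convex_on_continuous[OF open_UNIV H_convex] .

lemma isCont_weighted_hamiltonian: "isCont (weighted_hamiltonian N H tt) p"
  unfolding weighted_hamiltonian_def using hamiltonian_continuous
  by (intro continuous_intros) (simp add: continuous_on_eq_continuous_at)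

lemma weighted_hamiltonian_lower_bound: obtains K where "\<And>p. c * norm p - K \<le> weighted_hamiltonian N H tt p"
proof -
  obtain j0 where j0: "j0 \<in> {1..N}" using H_strict by blast
  define c' where "c' = \<bar>c\<bar> / tt j0"
  have "\<forall>j\<in>{1..N}. \<exists>K. \<forall>p. c' * norm p - K \<le> H j p"
    using one_coercive_lower_bound[OF hamiltonian_continuous H_coercive] by metis
  then obtain K where K: "\<And>j p. j \<in> {1..N} \<Longrightarrow> c' * norm p - K j \<le> H j p" by metis
  have "c * norm p - (\<Sum>j=1..N. tt j * K j) \<le> weighted_hamiltonian N H tt p" for p
  proof -
    have "c * norm p \<le> tt j0 * (c' * norm p)"
      using tt_pos[OF j0] by (simp add: c'_def mult_right_mono)
    also have "\<dots> \<le> (\<Sum>j=1..N. tt j * (c' * norm p))"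
      using tt_pos[OF j0] tt_pos[THEN less_imp_le]
      by (intro member_le_sum[OF j0]) (auto simp: c'_def intro!: mult_nonneg_nonneg divide_nonneg_pos)
    finally have "c * norm p - (\<Sum>j=1..N. tt j * K j) \<le> (\<Sum>j=1..N. tt j * (c' * norm p - K j))"
      by (simp add: right_diff_distrib sum_subtractf)
    also have "\<dots> \<le> weighted_hamiltonian N H tt p" unfolding weighted_hamiltonian_def
      using tt_pos K by (intro sum_mono mult_left_mono) (auto simp: less_imp_le)
    finally show ?thesis .
  qed
  then show ?thesis using that by blast
qed

lemma weighted_hamiltonian_midpoint_strict:
  assumes "p \<noteq> q"
  shows "weighted_hamiltonian N H tt ((1/2) *\<^sub>R (p + q))
           < (weighted_hamiltonian N H tt p + weighted_hamiltonian N H tt q) / 2"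
proof -
  have mid: "(1/2) *\<^sub>R (p + q) = (1 - 1/2) *\<^sub>R p + (1/2) *\<^sub>R q" by (simp add: scaleR_add_right)
  have le: "H j ((1/2) *\<^sub>R (p + q)) \<le> (H j p + H j q) / 2" if "j \<in> {1..N}" for j
    using convex_onD[OF H_convex[OF that], of "1/2" p q] mid by simp
  obtain j0 where j0: "j0 \<in> {1..N}" "strictly_convex (H j0)" using H_strict by blast
  have "p \<noteq> q \<and> 0 < (1/2::real) \<and> (1/2::real) < 1" using assms by simp
  then have "H j0 ((1 - 1/2) *\<^sub>R p + (1/2) *\<^sub>R q) < (1 - 1/2) * H j0 p + (1/2) * H j0 q"
    using j0(2) unfolding strictly_convex_def by blast
  then have lt: "H j0 ((1/2) *\<^sub>R (p + q)) < (H j0 p + H j0 q) / 2"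
    using mid by simp
  have "weighted_hamiltonian N H tt ((1/2) *\<^sub>R (p + q)) < (\<Sum>j=1..N. tt j * ((H j p + H j q) / 2))"
    unfolding weighted_hamiltonian_def
    by (rule sum_strict_mono_ex1)
       (use le lt j0 tt_pos in \<open>auto intro!: mult_left_mono less_imp_le mult_strict_left_mono\<close>)
  also have "\<dots> = (weighted_hamiltonian N H tt p + weighted_hamiltonian N H tt q) / 2"
    unfolding weighted_hamiltonian_def
    by (simp add: distrib_left add_divide_distrib sum.distrib sum_divide_distrib)
  finally show ?thesis .
qed

lemma strictly_convex_superlinear_legendre_plus:
  assumes J: "\<And>z. J z \<noteq> -\<infinity>" and Jx: "J x = ereal jx" and finite: "legendre J p0 \<noteq> \<infinity>"
  shows "strictly_convex_superlinear (\<lambda>p. legendre J p + ereal (weighted_hamiltonian N H tt p))"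
proof -
  let ?T = "weighted_hamiltonian N H tt"
  have affine: "ereal (p \<bullet> x - jx) \<le> legendre J p" for p
    using legendre_ge_affine[of J x jx p] Jx by blast
  have real: "legendre J p = ereal (r - ?T p)" if "legendre J p + ereal (?T p) = ereal r" for p r
    using that affine[of p] by (cases "legendre J p") auto
  show ?thesis
  proof
    show "legendre J p + ereal (?T p) \<noteq> -\<infinity>" for p
      using affine[of p] by (cases "legendre J p") auto
    show "\<exists>p. legendre J p + ereal (?T p) \<noteq> \<infinity>"
      using finite by (intro exI[of _ p0]) (cases "legendre J p0"; auto)
  next
    fix p q and c :: "nat \<Rightarrow> real" and d
    assume pq: "p \<longlonglongrightarrow> q" and le: "\<And>n. legendre J (p n) + ereal (?T (p n)) \<le> ereal (c n)"
      and cd: "c \<longlonglongrightarrow> d"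
    have "legendre J (p n) \<le> ereal (c n - ?T (p n))" for n
      using le[of n] affine[of "p n"] by (cases "legendre J (p n)") auto
    then have "legendre J q \<le> ereal (d - ?T q)"
      by (rule legendre_seq_lsc[OF J pq, rotated])
         (intro tendsto_intros cd isCont_tendsto_compose[OF isCont_weighted_hamiltonian] pq)
    then show "legendre J q + ereal (?T q) \<le> ereal d"
      using affine[of q] by (cases "legendre J q") auto
  next
    fix p q and a b
    assume ne: "p \<noteq> q" and a: "legendre J p + ereal (?T p) = ereal a"
      and b: "legendre J q + ereal (?T q) = ereal b"
    let ?m = "(1/2) *\<^sub>R (p + q)"
    have "legendre J ?m \<le> ereal ((a - ?T p + (b - ?T q)) / 2)"
      by (rule legendre_midpoint_le[OF J real[OF a] real[OF b]])
    then show "legendre J ?m + ereal (?T ?m) < ereal ((a + b) / 2)"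
      using weighted_hamiltonian_midpoint_strict[OF ne] affine[of ?m]
      by (cases "legendre J ?m") (auto simp: field_simps)
  next
    fix c
    obtain K where K: "\<And>p. (c + norm x) * norm p - K \<le> ?T p"
      using weighted_hamiltonian_lower_bound by blast
    have "ereal (c * norm p - (K + jx)) \<le> legendre J p + ereal (?T p)" for p
    proof -
      have "- (p \<bullet> x) \<le> norm p * norm x"
        by (rule order_trans[OF abs_ge_minus_self Cauchy_Schwarz_ineq2])
      then have "c * norm p - (K + jx) \<le> p \<bullet> x - jx + ?T p"
        using K[of p] by (simp add: algebra_simps)
      then show ?thesis
        using affine[of p] by (cases "legendre J p") auto
    qed
    then show "\<exists>K. \<forall>p. ereal (c * norm p - K) \<le> legendre J p + ereal (?T p)" by blast
  qed
qed

lemma legendre_hopf_grad_le: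
  fixes J :: "'a \<Rightarrow> ereal" and x :: 'a and w :: "nat \<Rightarrow> 'a"
  assumes J: "\<And>z. J z \<noteq> -\<infinity>" and Jx: "J x = ereal jx" and p0: "p0 \<in> subdiff J x"
  defines "p \<equiv> hopf_grad N H J (x + (\<Sum>j=1..N. tt j *\<^sub>R w j)) tt"
  shows "legendre J p \<le> ereal (p \<bullet> x - jx + (\<Sum>j=1..N. tt j * hamiltonian_gap (H j) p0 (w j) p))"
proof -
  let ?T = "weighted_hamiltonian N H tt" and ?y = "x + (\<Sum>j=1..N. tt j *\<^sub>R w j)"
  have affine: "ereal (q \<bullet> x - jx) \<le> legendre J q" for q
    using legendre_ge_affine[of J x jx q] Jx by blast
  have L0: "legendre J p0 = ereal (p0 \<bullet> x - jx)"
    using p0 affine[of p0] unfolding subdiff_iff_legendre_le[of J x jx, OF J Jx] by (rule antisym)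
  interpret F: strictly_convex_superlinear "\<lambda>q. legendre J q + ereal (?T q)"
    by (rule strictly_convex_superlinear_legendre_plus[of J x jx p0, OF J Jx]) (simp add: L0)
  have L: "legendre J q \<noteq> -\<infinity>" for q
    using affine[of q] by auto
  have "p = F.maximizer ?y"
    unfolding p_def using F.strictly_convex_superlinear_axioms
    by (rule hopf_grad_eq_maximizer) (simp add: hopf_eq_conjugate[OF L] F.conjugate_def)
  then have "legendre J p + ereal (?T p) + ereal (p0 \<bullet> ?y) \<le> legendre J p0 + ereal (?T p0) + ereal (p \<bullet> ?y)"
    using F.maximizer_optimal[of ?y p0] by simp
  then show ?thesis
    using L0 L[of p] unfolding sum_hamiltonian_gap
    by (cases "legendre J p") (auto simp: inner_diff_left inner_add_right)
qed

end

lemma hamiltonian_gap_le: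
  fixes h :: "'a::euclidean_space \<Rightarrow> real"
  assumes "continuous_on UNIV h" "one_coercive h"
  obtains A where "\<And>p w. norm w \<le> V \<Longrightarrow> hamiltonian_gap h p0 w p \<le> A - c * norm p"
proof -
  obtain K where K: "\<And>p. (V + c) * norm p - K \<le> h p"
    using one_coercive_lower_bound[OF assms] by blast
  have "hamiltonian_gap h p0 w p \<le> K + norm p0 * V + h p0 - c * norm p" if w: "norm w \<le> V" for p w
  proof -
    have "(p - p0) \<bullet> w \<le> norm p * V + norm p0 * V"
      using Cauchy_Schwarz_ineq2[of p w] Cauchy_Schwarz_ineq2[of p0 w]
        mult_left_mono[OF w norm_ge_zero[of p]] mult_left_mono[OF w norm_ge_zero[of p0]]
      by (simp add: inner_diff_left abs_le_iff)
    then show ?thesis using K[of p] unfolding hamiltonian_gap_def by (simp add: algebra_simps)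
  qed
  then show ?thesis using that by blast
qed

lemma weighted_sum_nonneg_first_term_bound:
  fixes t g A B :: "nat \<Rightarrow> real"
  assumes "1 \<le> N" and t_pos: "\<And>j. j \<in> {1..N} \<Longrightarrow> 0 < t j"
    and t_le: "\<And>j. j \<in> {1..N} \<Longrightarrow> t j \<le> B j * t 1" and g_le: "\<And>j. j \<in> {1..N} \<Longrightarrow> g j \<le> A j"
    and nonneg: "0 \<le> (\<Sum>j=1..N. t j * g j)"
  shows "0 \<le> g 1 + (\<Sum>j=2..N. B j * max (A j) 0)"
proof -
  have t1: "0 < t 1" using t_pos assms(1) by simp
  have term_le: "t j * g j \<le> t 1 * (B j * max (A j) 0)" if "j \<in> {2..N}" for j
  proof -
    have j: "j \<in> {1..N}" using that by simp
    have "t j * g j \<le> t j * max (A j) 0"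
      using g_le[OF j] t_pos[OF j] by (intro mult_left_mono) auto
    also have "\<dots> \<le> (B j * t 1) * max (A j) 0"
      using t_le[OF j] by (intro mult_right_mono) auto
    finally show ?thesis by (simp add: algebra_simps)
  qed
  have "(\<Sum>j=1..N. t j * g j) = t 1 * g 1 + (\<Sum>j=2..N. t j * g j)"
    using assms(1) by (simp add: sum.atLeast_Suc_atMost numeral_2_eq_2)
  also have "\<dots> \<le> t 1 * g 1 + (\<Sum>j=2..N. t 1 * (B j * max (A j) 0))"
    using term_le by (intro add_left_mono sum_mono) auto
  also have "\<dots> = t 1 * (g 1 + (\<Sum>j=2..N. B j * max (A j) 0))"
    by (simp add: distrib_left sum_distrib_left)
  finally have "0 \<le> t 1 * (g 1 + (\<Sum>j=2..N. B j * max (A j) 0))"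
    using nonneg by linarith
  then show ?thesis using t1 by (auto simp: zero_le_mult_iff)
qed

context
  fixes N :: nat and H :: "nat \<Rightarrow> 'a::euclidean_space \<Rightarrow> real" and t :: "nat \<Rightarrow> nat \<Rightarrow> real"
    and v :: "nat \<Rightarrow> nat \<Rightarrow> 'a" and p0 :: 'a
  assumes H_continuous: "\<And>j. j \<in> {1..N} \<Longrightarrow> continuous_on UNIV (H j)"
    and H_coercive: "\<And>j. j \<in> {1..N} \<Longrightarrow> one_coercive (H j)"
    and t_pos: "\<And>j k. j \<in> {1..N} \<Longrightarrow> t j k > 0"
    and v_bounded: "\<And>j. j \<in> {1..N} \<Longrightarrow> bounded (range (v j))"
begin

lemma hamiltonian_gap_uniform_le:
  obtains A where "\<And>j k p. j \<in> {1..N} \<Longrightarrow> hamiltonian_gap (H j) p0 (v j k) p \<le> A j - c * norm p"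
proof -
  have "\<exists>A. \<forall>k p. hamiltonian_gap (H j) p0 (v j k) p \<le> A - c * norm p" if j: "j \<in> {1..N}" for j
  proof -
    obtain V where "\<And>k. norm (v j k) \<le> V" using v_bounded[OF j] unfolding bounded_iff by blast
    moreover obtain A where "\<And>p w. norm w \<le> V \<Longrightarrow> hamiltonian_gap (H j) p0 w p \<le> A - c * norm p"
      using hamiltonian_gap_le[OF H_continuous[OF j] H_coercive[OF j]] by blast
    ultimately show ?thesis by blast
  qed
  then show ?thesis using that by metis
qed

lemma weighted_gap_le_null_sequence:
  assumes t_lim: "\<And>j. j \<in> {1..N} \<Longrightarrow> (\<lambda>k. t j k) \<longlonglongrightarrow> 0"
  obtains e where "e \<longlonglongrightarrow> 0"
    and "\<And>k p. (\<Sum>j=1..N. t j k * hamiltonian_gap (H j) p0 (v j k) p) \<le> e k"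
proof -
  obtain A where A: "\<And>j k p. j \<in> {1..N} \<Longrightarrow> hamiltonian_gap (H j) p0 (v j k) p \<le> A j - 0 * norm p"
    using hamiltonian_gap_uniform_le by blast
  have "(\<lambda>k. \<Sum>j=1..N. t j k * A j) \<longlonglongrightarrow> (\<Sum>j=1..N. 0 * A j)"
    by (intro tendsto_sum tendsto_mult_right t_lim) simp
  moreover have "(\<Sum>j=1..N. t j k * hamiltonian_gap (H j) p0 (v j k) p) \<le> (\<Sum>j=1..N. t j k * A j)" for k p
    using A t_pos by (intro sum_mono mult_left_mono) (auto simp: less_imp_le)
  ultimately show ?thesis using that by simp
qed

lemma bounded_if_weighted_gap_nonneg:
  assumes N: "1 \<le> N"
    and ratio_bounded: "\<And>j. j \<in> {1..N} \<Longrightarrow> bounded (range (\<lambda>k. t j k / t 1 k))"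
    and nonneg: "\<And>k. 0 \<le> (\<Sum>j=1..N. t j k * hamiltonian_gap (H j) p0 (v j k) (p k))"
  shows "bounded (range p)"
proof -
  obtain A where A: "\<And>j k p. j \<in> {1..N} \<Longrightarrow> hamiltonian_gap (H j) p0 (v j k) p \<le> A j - 0 * norm p"
    using hamiltonian_gap_uniform_le by blast
  obtain A1 where A1: "\<And>j k p. j \<in> {1..N} \<Longrightarrow> hamiltonian_gap (H j) p0 (v j k) p \<le> A1 j - 1 * norm p"
    using hamiltonian_gap_uniform_le by blast
  have "\<exists>B. \<forall>k. t j k \<le> B * t 1 k" if j: "j \<in> {1..N}" for j
  proof -
    obtain B where B: "\<And>k. norm (t j k / t 1 k) \<le> B"
      using ratio_bounded[OF j] unfolding bounded_iff by blast
    have "t j k \<le> B * t 1 k" for k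
    proof -
      have "t j k / t 1 k \<le> B" using B[of k] by (metis abs_ge_self order_trans real_norm_def)
      then show ?thesis using t_pos[of 1 k] N by (simp add: divide_le_eq)
    qed
    then show ?thesis by blast
  qed
  then obtain B where B: "\<And>j k. j \<in> {1..N} \<Longrightarrow> t j k \<le> B j * t 1 k" by metis
  have "norm (p k) \<le> A1 1 + (\<Sum>j=2..N. B j * max (A j) 0)" for k
  proof -
    have "0 \<le> hamiltonian_gap (H 1) p0 (v 1 k) (p k) + (\<Sum>j=2..N. B j * max (A j) 0)"
      using N t_pos B A nonneg
      by (intro weighted_sum_nonneg_first_term_bound[where t = "\<lambda>j. t j k"]) auto
    then show ?thesis using A1[of 1 k "p k"] N by simp
  qed
  then show ?thesis unfolding bounded_iff by blast
qed

end

lemma cluster_point_in_subdiff: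
  assumes J: "\<And>z. J z \<noteq> -\<infinity>" and Jx: "J x = ereal jx"
    and le: "\<And>k. legendre J (p k) \<le> ereal (p k \<bullet> x - jx + e k)" and e: "e \<longlonglongrightarrow> 0"
    and q: "cluster_point p q"
  shows "q \<in> subdiff J x"
proof -
  obtain r where r: "strict_mono r" and pr: "(p \<circ> r) \<longlonglongrightarrow> q"
    using q unfolding cluster_point_def by blast
  have "(\<lambda>n. (p \<circ> r) n \<bullet> x - jx + e (r n)) \<longlonglongrightarrow> q \<bullet> x - jx + 0"
    using LIMSEQ_subseq_LIMSEQ[OF e r] by (intro tendsto_intros pr) (simp add: o_def)
  then have "legendre J q \<le> ereal (q \<bullet> x - jx + 0)"
    using le by (intro legendre_seq_lsc[OF J pr]) simp_all
  then show ?thesis using subdiff_iff_legendre_le[of J x jx, OF J Jx] by simp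
qed

theorem lemma3p4:
  fixes N :: nat
    and H :: "nat \<Rightarrow> 'a::euclidean_space \<Rightarrow> real"
    and J :: "'a \<Rightarrow> ereal"
    and x :: 'a
    and t :: "nat \<Rightarrow> nat \<Rightarrow> real"
    and v :: "nat \<Rightarrow> nat \<Rightarrow> 'a"
    and v_inf :: "nat \<Rightarrow> 'a"
    and alpha :: "nat \<Rightarrow> real"
    and xs :: "nat \<Rightarrow> 'a"
  assumes H_convex: "\<And>j. j \<in> {1..N} \<Longrightarrow> convex_on UNIV (H j)"
    and H_coercive: "\<And>j. j \<in> {1..N} \<Longrightarrow> one_coercive (H j)"
    and H_strict: "\<exists>j\<in>{1..N}. strictly_convex (H j)"
    and J_proper: "proper_fun J"
    and J_convex: "convex_fun J"
    and J_lsc: "lsc_fun J"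
    and t_pos: "\<And>j k. j \<in> {1..N} \<Longrightarrow> t j k > 0"
    and t_lim: "\<And>j. j \<in> {1..N} \<Longrightarrow> (\<lambda>k. t j k) \<longlonglongrightarrow> 0"
    and v_lim: "\<And>j. j \<in> {1..N} \<Longrightarrow> (\<lambda>k. v j k) \<longlonglongrightarrow> v_inf j"
    and ratio_lim: "\<And>j. j \<in> {1..N} \<Longrightarrow> (\<lambda>k. t j k / t 1 k) \<longlonglongrightarrow> alpha j"
    and xs_def: "\<And>k. xs k = x + (\<Sum>j=1..N. t j k *\<^sub>R v j k)"
    and x_dom: "J x < \<infinity>"
    and subdiff_ne: "subdiff J x \<noteq> {}"
  shows "bounded (range (\<lambda>k. hopf_grad N H J (xs k) (\<lambda>j. t j k)))
       \<and> (\<forall>q. cluster_point (\<lambda>k. hopf_grad N H J (xs k) (\<lambda>j. t j k)) q \<longrightarrow> q \<in> subdiff J x)"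
proof -
  have N: "1 \<le> N" using H_strict by auto
  have J: "\<And>z. J z \<noteq> -\<infinity>" using J_proper unfolding proper_fun_def by blast
  obtain jx where Jx: "J x = ereal jx" using x_dom J[of x] by (cases "J x") auto
  obtain p0 where p0: "p0 \<in> subdiff J x" using subdiff_ne by blast
  define p where "p k = hopf_grad N H J (xs k) (\<lambda>j. t j k)" for k
  define gap where "gap k = (\<Sum>j=1..N. t j k * hamiltonian_gap (H j) p0 (v j k) (p k))" for k
  have excess: "legendre J (p k) \<le> ereal (p k \<bullet> x - jx + gap k)" for k
    unfolding p_def gap_def xs_def
    by (rule legendre_hopf_grad_le[where tt = "\<lambda>j. t j k", OF H_convex H_coercive H_strict t_pos J Jx p0])
  have gap_nonneg: "0 \<le> gap k" for k
    using order_trans[OF legendre_ge_affine[of J x jx "p k"] excess[of k]] Jx by simp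
  have H_continuous: "\<And>j. j \<in> {1..N} \<Longrightarrow> continuous_on UNIV (H j)"
    using convex_on_continuous[OF open_UNIV H_convex] .
  have v_bounded: "\<And>j. j \<in> {1..N} \<Longrightarrow> bounded (range (v j))"
    using convergent_imp_bounded[OF v_lim] .
  obtain e where e: "e \<longlonglongrightarrow> 0"
    and gap_bound: "\<And>k q. (\<Sum>j=1..N. t j k * hamiltonian_gap (H j) p0 (v j k) q) \<le> e k"
    using weighted_gap_le_null_sequence[of N H t v p0, OF H_continuous H_coercive t_pos v_bounded t_lim]
    by blast
  have gap_le: "gap k \<le> e k" for k unfolding gap_def by (rule gap_bound)
  have "bounded (range p)"
    using H_continuous H_coercive t_pos v_bounded N ratio_lim[THEN convergent_imp_bounded] gap_nonneg
    unfolding gap_def by (rule bounded_if_weighted_gap_nonneg[of N H t v p0])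
  moreover have "q \<in> subdiff J x" if "cluster_point p q" for q
    by (intro cluster_point_in_subdiff[of J x jx, OF J Jx _ e that] order_trans[OF excess])
       (simp add: gap_le)
  ultimately show ?thesis unfolding p_def by blast
qed

end
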